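(* Let $(X,\Gamma)$ be a $(\mu,\nu)$-path system space. For every $\delta\ge0$ and $\varepsilon\ge0$ there exists $\theta\ge0$ with the following property. Let $A,B\subseteq X$ be subsets with $\delta$-constricting maps $\pi_A\colon X\to A$ and $\pi_B\colon X\to B$, and let $Y\subseteq X$ be non-empty, such that $\operatorname{diam}_A(B)\le\varepsilon$, $\operatorname{diam}_B(A)\le\varepsilon$, $\operatorname{diam}_A(Y)\le\varepsilon$, $\operatorname{diam}_B(Y)\le\varepsilon$, $d(A,Y)\le\varepsilon$ and $d(B,Y)\le\varepsilon$. Then for every $x\in X$, $\min\{d_A(x,Y),d_B(x,Y)\}\le\theta$.
   Context: A path is a rectifiable continuous map $\alpha\colon[a,b]\to X$ parametrised by arc length; it is a $(\kappa,\lambda)$-quasi-geodesic if $d(\alpha(t),\alpha(t'))\le|t-t'|\le\kappa d(\alpha(t),\alpha(t'))+\lambda$. A $(\mu,\nu)$-path system space $(X,\Gamma)$ is a geodesic metric space $X$ with a collection $\Gamma$ of paths closed under subpaths, such that any two points are joined by an element of $\Gamma$ and every element is a $(\mu,\nu)$-quasi-geodesic. A map $\pi_A\colon X\to A$ onto a subset $A$ is $\delta$-constricting if (CS1) $d(x,\pi_A(x))\le\delta$ for $x\in A$, and (CS2) for all $x,y\in X$ and $\gamma\in\Gamma$ joining $x$ to $y$, if $d(\pi_A(x),\pi_A(y))>\delta$ then $\gamma$ meets $B_X(\pi_A(x),\delta)$ and $B_X(\pi_A(y),\delta)$. Notation: $d_A(x,y)=d(\pi_A(x),\pi_A(y))$,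 $\operatorname{diam}_A(Y)=\operatorname{diam}(\pi_A(Y))$, $d_A(x,Y)=d(\pi_A(x),\pi_A(Y))$, $d_A(Y,Z)=d(\pi_A(Y),\pi_A(Z))$, where $d$ between sets is the infimum of distances. *)

theory Defs
  imports "HOL-Analysis.Analysis"
begin

text \<open>The metric space X is the whole type 'a. A path is a triple (a, b, alpha) with
  alpha restricted to the interval [a,b].\<close>

type_synonym 'a rpath = "real \<times> real \<times> (real \<Rightarrow> 'a)"

definition variation_sums :: "(real \<Rightarrow> 'a::metric_space) \<Rightarrow> real \<Rightarrow> real \<Rightarrow> real set" where
  "variation_sums \<alpha> s t =
     {(\<Sum>i<n. dist (\<alpha> (p i)) (\<alpha> (p (Suc i)))) | p n.
        p 0 = s \<and> p n = t \<and> (\<forall>i<n. p i \<le> p (Suc i))}"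

definition rectifiable_on :: "(real \<Rightarrow> 'a::metric_space) \<Rightarrow> real \<Rightarrow> real \<Rightarrow> bool" where
  "rectifiable_on \<alpha> s t \<longleftrightarrow> bdd_above (variation_sums \<alpha> s t)"

definition length_on :: "(real \<Rightarrow> 'a::metric_space) \<Rightarrow> real \<Rightarrow> real \<Rightarrow> real" where
  "length_on \<alpha> s t = Sup (variation_sums \<alpha> s t)"

definition is_path :: "'a::metric_space rpath \<Rightarrow> bool" where
  "is_path \<gamma> \<longleftrightarrow> (case \<gamma> of (a, b, \<alpha>) \<Rightarrow>
      a \<le> b \<and> continuous_on {a..b} \<alpha> \<and> rectifiable_on \<alpha> a b \<and>
      (\<forall>s t. a \<le> s \<and> s \<le> t \<and> t \<le> b \<longrightarrow> length_on \<alpha> s t = t - s))"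

definition quasi_geodesic :: "real \<Rightarrow> real \<Rightarrow> 'a::metric_space rpath \<Rightarrow> bool" where
  "quasi_geodesic kap lam \<gamma> \<longleftrightarrow> is_path \<gamma> \<and> (case \<gamma> of (a, b, \<alpha>) \<Rightarrow>
      (\<forall>t\<in>{a..b}. \<forall>t'\<in>{a..b}. dist (\<alpha> t) (\<alpha> t') \<le> \<bar>t - t'\<bar> \<and>
                                \<bar>t - t'\<bar> \<le> kap * dist (\<alpha> t) (\<alpha> t') + lam))"

definition joins :: "'a rpath \<Rightarrow> 'a \<Rightarrow> 'a \<Rightarrow> bool" where
  "joins \<gamma> x y \<longleftrightarrow> (case \<gamma> of (a, b, \<alpha>) \<Rightarrow> \<alpha> a = x \<and> \<alpha> b = y)"

definition meets :: "'a rpath \<Rightarrow> 'a set \<Rightarrow> bool" where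
  "meets \<gamma> S \<longleftrightarrow> (case \<gamma> of (a, b, \<alpha>) \<Rightarrow> (\<exists>t\<in>{a..b}. \<alpha> t \<in> S))"

definition geodesic_space :: "'a::metric_space itself \<Rightarrow> bool" where
  "geodesic_space _ \<longleftrightarrow> (\<forall>x y::'a. \<exists>g. g 0 = x \<and> g (dist x y) = y \<and>
      (\<forall>s\<in>{0..dist x y}. \<forall>t\<in>{0..dist x y}. dist (g s) (g t) = \<bar>s - t\<bar>))"

definition path_system_space :: "real \<Rightarrow> real \<Rightarrow> 'a::metric_space rpath set \<Rightarrow> bool" where
  "path_system_space \<mu> \<nu> \<Gamma> \<longleftrightarrow>
     geodesic_space TYPE('a) \<and>
     (\<forall>a b \<alpha> c d. (a, b, \<alpha>) \<in> \<Gamma> \<and> a \<le> c \<and> c \<le> d \<and> d \<le> b \<longrightarrow> (c, d, \<alpha>) \<in> \<Gamma>) \<and>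
     (\<forall>x y. \<exists>\<gamma>\<in>\<Gamma>. joins \<gamma> x y) \<and>
     (\<forall>\<gamma>\<in>\<Gamma>. quasi_geodesic \<mu> \<nu> \<gamma>)"

text \<open>Balls B_X(p,r) are read as closed balls.\<close>
definition constricting :: "'a::metric_space rpath set \<Rightarrow> real \<Rightarrow> 'a set \<Rightarrow> ('a \<Rightarrow> 'a) \<Rightarrow> bool" where
  "constricting \<Gamma> \<delta> A \<pi> \<longleftrightarrow>
     range \<pi> = A \<and>
     (\<forall>x\<in>A. dist x (\<pi> x) \<le> \<delta>) \<and>
     (\<forall>x y. \<forall>\<gamma>\<in>\<Gamma>. joins \<gamma> x y \<and> dist (\<pi> x) (\<pi> y) > \<delta> \<longrightarrow>
         meets \<gamma> (cball (\<pi> x) \<delta>) \<and> meets \<gamma> (cball (\<pi> y) \<delta>))"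

text \<open>diam(S) \<le> e, written out (so unbounded sets do not satisfy it spuriously).\<close>
definition diam_le :: "'a::metric_space set \<Rightarrow> real \<Rightarrow> bool" where
  "diam_le S e \<longleftrightarrow> (\<forall>p\<in>S. \<forall>q\<in>S. dist p q \<le> e)"

end

theory Submission
  imports Defs
begin

text \<open>Join x to a point y of Y lying near B by a path of \<Gamma>. If the A-projections of x and y
  are far apart, the path passes near \<pi>A x at some point r. The B-projection of r is close to
  \<pi>B y, because \<pi>A x lies in A, whose B-projection is small and lies near Y. So if the
  B-projections of x and y are also far apart, then so are those of x and r, and the initial
  segment from x to r passes near \<pi>B r, hence near y. Since the path is a quasi-geodesic, r is
  then near y as well, so \<pi>A x is near y and \<pi>A y is near \<pi>A x. Only the bounds on
  diam_B(A) and diam_B(Y) enter the argument.\<close>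

lemma quasi_geodesic_le: "quasi_geodesic kap lam (a, b, \<alpha>) \<Longrightarrow> a \<le> b"
  unfolding quasi_geodesic_def is_path_def by simp

lemma quasi_geodesic_dist_le:
  assumes "quasi_geodesic kap lam (a, b, \<alpha>)" "t \<in> {a..b}" "t' \<in> {a..b}"
  shows "dist (\<alpha> t) (\<alpha> t') \<le> \<bar>t - t'\<bar>"
  using assms unfolding quasi_geodesic_def by simp

lemma quasi_geodesic_param_dist_le:
  assumes "quasi_geodesic kap lam (a, b, \<alpha>)" "t \<in> {a..b}" "t' \<in> {a..b}"
    and "dist (\<alpha> t) (\<alpha> t') \<le> D"
  shows "\<bar>t - t'\<bar> \<le> \<bar>kap\<bar> * D + \<bar>lam\<bar>"
proof -
  have "\<bar>t - t'\<bar> \<le> kap * dist (\<alpha> t) (\<alpha> t') + lam"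
    using assms(1-3) unfolding quasi_geodesic_def by simp
  also have "kap * dist (\<alpha> t) (\<alpha> t') \<le> \<bar>kap\<bar> * dist (\<alpha> t) (\<alpha> t')"
    by (simp add: mult_right_mono)
  also have "\<dots> \<le> \<bar>kap\<bar> * D" by (simp add: mult_left_mono assms(4))
  finally show ?thesis by linarith
qed

lemma path_system_space_joins:
  assumes "path_system_space \<mu> \<nu> \<Gamma>"
  obtains a b \<alpha> where "(a, b, \<alpha>) \<in> \<Gamma>" "\<alpha> a = x" "\<alpha> b = y"
proof -
  obtain \<gamma> where "\<gamma> \<in> \<Gamma>" "joins \<gamma> x y" using assms unfolding path_system_space_def by blast
  then show thesis using that by (cases \<gamma>) (auto simp: joins_def)
qed

lemma path_system_space_subpath:
  assumes "path_system_space \<mu> \<nu> \<Gamma>" "(a, b, \<alpha>) \<in> \<Gamma>" "a \<le> c" "c \<le> d" "d \<le> b"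
  shows "(c, d, \<alpha>) \<in> \<Gamma>"
  using assms unfolding path_system_space_def by blast

lemma path_system_space_quasi_geodesic:
  "path_system_space \<mu> \<nu> \<Gamma> \<Longrightarrow> \<gamma> \<in> \<Gamma> \<Longrightarrow> quasi_geodesic \<mu> \<nu> \<gamma>"
  unfolding path_system_space_def by blast

lemma constricting_range: "constricting \<Gamma> \<delta> A \<pi> \<Longrightarrow> \<pi> z \<in> A"
  unfolding constricting_def by blast

lemma constricting_dist_self_le: "constricting \<Gamma> \<delta> A \<pi> \<Longrightarrow> z \<in> A \<Longrightarrow> dist z (\<pi> z) \<le> \<delta>"
  unfolding constricting_def by blast

lemma constricting_meets_near_start:
  assumes "constricting \<Gamma> \<delta> A \<pi>" "(a, b, \<alpha>) \<in> \<Gamma>" "dist (\<pi> (\<alpha> a)) (\<pi> (\<alpha> b)) > \<delta>"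
  obtains s where "s \<in> {a..b}" "dist (\<pi> (\<alpha> a)) (\<alpha> s) \<le> \<delta>"
proof -
  have "meets (a, b, \<alpha>) (cball (\<pi> (\<alpha> a)) \<delta>)"
    using assms unfolding constricting_def joins_def by blast
  then show ?thesis using that unfolding meets_def by auto
qed

lemma constricting_meets_near_end:
  assumes "constricting \<Gamma> \<delta> A \<pi>" "(a, b, \<alpha>) \<in> \<Gamma>" "dist (\<pi> (\<alpha> a)) (\<pi> (\<alpha> b)) > \<delta>"
  obtains t where "t \<in> {a..b}" "dist (\<pi> (\<alpha> b)) (\<alpha> t) \<le> \<delta>"
proof -
  have "meets (a, b, \<alpha>) (cball (\<pi> (\<alpha> b)) \<delta>)"
    using assms unfolding constricting_def joins_def by blast
  then show ?thesis using that unfolding meets_def by auto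
qed

definition coarse_lip_bound :: "real \<Rightarrow> real \<Rightarrow> real \<Rightarrow> real \<Rightarrow> real" where
  "coarse_lip_bound \<mu> \<nu> \<delta> D = 2*\<delta> + \<bar>\<mu>\<bar> * D + \<bar>\<nu>\<bar>"

lemma coarse_lip_bound_nonneg: "\<delta> \<ge> 0 \<Longrightarrow> D \<ge> 0 \<Longrightarrow> coarse_lip_bound \<mu> \<nu> \<delta> D \<ge> 0"
  unfolding coarse_lip_bound_def by simp

lemma constricting_coarse_lipschitz:
  assumes pss: "path_system_space \<mu> \<nu> \<Gamma>" and cons: "constricting \<Gamma> \<delta> A \<pi>"
    and zw: "dist z w \<le> D"
  shows "dist (\<pi> z) (\<pi> w) \<le> coarse_lip_bound \<mu> \<nu> \<delta> D"
  unfolding coarse_lip_bound_def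
proof (cases "dist (\<pi> z) (\<pi> w) \<le> \<delta>")
  case True
  moreover have "D \<ge> 0" using zw zero_le_dist[of z w] by linarith
  then have "0 \<le> \<bar>\<mu>\<bar> * D" by simp
  ultimately show "dist (\<pi> z) (\<pi> w) \<le> 2*\<delta> + \<bar>\<mu>\<bar> * D + \<bar>\<nu>\<bar>"
    using zero_le_dist[of "\<pi> z" "\<pi> w"] by linarith
next
  case False
  obtain a b \<alpha> where \<gamma>: "(a, b, \<alpha>) \<in> \<Gamma>" "\<alpha> a = z" "\<alpha> b = w"
    using path_system_space_joins[OF pss] .
  have qg: "quasi_geodesic \<mu> \<nu> (a, b, \<alpha>)" using path_system_space_quasi_geodesic[OF pss \<gamma>(1)] .
  then have ab: "a \<in> {a..b}" "b \<in> {a..b}" using quasi_geodesic_le by auto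
  have far: "dist (\<pi> (\<alpha> a)) (\<pi> (\<alpha> b)) > \<delta>" using False \<gamma>(2,3) by simp
  obtain s where s: "s \<in> {a..b}" "dist (\<pi> z) (\<alpha> s) \<le> \<delta>"
    using constricting_meets_near_start[OF cons \<gamma>(1) far] \<gamma>(2) by blast
  obtain t where t: "t \<in> {a..b}" "dist (\<pi> w) (\<alpha> t) \<le> \<delta>"
    using constricting_meets_near_end[OF cons \<gamma>(1) far] \<gamma>(3) by blast
  have "dist (\<alpha> s) (\<alpha> t) \<le> \<bar>s - t\<bar>" using quasi_geodesic_dist_le[OF qg s(1) t(1)] .
  also have "\<bar>s - t\<bar> \<le> \<bar>a - b\<bar>" using s(1) t(1) by auto
  also have "\<bar>a - b\<bar> \<le> \<bar>\<mu>\<bar> * D + \<bar>\<nu>\<bar>"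
    using quasi_geodesic_param_dist_le[OF qg ab] \<gamma>(2,3) zw by blast
  finally have "dist (\<alpha> s) (\<alpha> t) \<le> \<bar>\<mu>\<bar> * D + \<bar>\<nu>\<bar>" .
  then show "dist (\<pi> z) (\<pi> w) \<le> 2*\<delta> + \<bar>\<mu>\<bar> * D + \<bar>\<nu>\<bar>"
    using s(2) t(2) dist_triangle[of "\<pi> z" "\<pi> w" "\<alpha> s"] dist_triangle[of "\<alpha> s" "\<pi> w" "\<alpha> t"]
    by (simp add: dist_commute)
qed

lemma constricting_dist_proj_self_le:
  assumes pss: "path_system_space \<mu> \<nu> \<Gamma>" and cons: "constricting \<Gamma> \<delta> A \<pi>"
    and "p \<in> A" "dist z p \<le> D"
  shows "dist (\<pi> z) z \<le> coarse_lip_bound \<mu> \<nu> \<delta> D + \<delta> + D"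
proof -
  have "dist (\<pi> z) (\<pi> p) \<le> coarse_lip_bound \<mu> \<nu> \<delta> D"
    using constricting_coarse_lipschitz[OF pss cons assms(4)] .
  moreover have "dist (\<pi> p) p \<le> \<delta>" using constricting_dist_self_le[OF cons assms(3)] by (simp add: dist_commute)
  ultimately show ?thesis using assms(4) dist_triangle[of "\<pi> z" z "\<pi> p"] dist_triangle[of "\<pi> p" z p]
    by (simp add: dist_commute)
qed

lemma constricting_dist_proj_le_of_near_proj:
  assumes pss: "path_system_space \<mu> \<nu> \<Gamma>" and cons: "constricting \<Gamma> \<delta> A \<pi>"
    and "dist (\<pi> x) y \<le> D"
  shows "dist (\<pi> x) (\<pi> y) \<le> \<delta> + coarse_lip_bound \<mu> \<nu> \<delta> D"
proof -
  have "dist (\<pi> (\<pi> x)) (\<pi> y) \<le> coarse_lip_bound \<mu> \<nu> \<delta> D"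
    using constricting_coarse_lipschitz[OF pss cons assms(3)] .
  moreover have "dist (\<pi> x) (\<pi> (\<pi> x)) \<le> \<delta>"
    using constricting_dist_self_le[OF cons constricting_range[OF cons]] .
  ultimately show ?thesis using dist_triangle[of "\<pi> x" "\<pi> y" "\<pi> (\<pi> x)"] by linarith
qed

lemma constricting_proj_dist_le_of_diam_le:
  assumes pss: "path_system_space \<mu> \<nu> \<Gamma>" and cons: "constricting \<Gamma> \<delta> B \<pi>"
    and diam_A: "diam_le (\<pi> ` A) \<epsilon>" and diam_Y: "diam_le (\<pi> ` Y) \<epsilon>"
    and a: "a \<in> A" "y' \<in> Y" "dist a y' \<le> \<eta>"
    and "p \<in> A" "y \<in> Y"
  shows "dist (\<pi> p) (\<pi> y) \<le> 2*\<epsilon> + coarse_lip_bound \<mu> \<nu> \<delta> \<eta>"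
proof -
  have "dist (\<pi> p) (\<pi> a) \<le> \<epsilon>" using diam_A a(1) \<open>p \<in> A\<close> unfolding diam_le_def by blast
  moreover have "dist (\<pi> a) (\<pi> y') \<le> coarse_lip_bound \<mu> \<nu> \<delta> \<eta>"
    using constricting_coarse_lipschitz[OF pss cons a(3)] .
  moreover have "dist (\<pi> y') (\<pi> y) \<le> \<epsilon>" using diam_Y a(2) \<open>y \<in> Y\<close> unfolding diam_le_def by blast
  ultimately show ?thesis
    using dist_triangle[of "\<pi> p" "\<pi> y" "\<pi> a"] dist_triangle[of "\<pi> a" "\<pi> y" "\<pi> y'"] by linarith
qed

text \<open>The initial segment from \<alpha> a to \<alpha> s passes within \<delta> of \<pi> (\<alpha> s), hence within
  \<delta> + R of the endpoint \<alpha> b; as s lies between that point and b, the quasi-geodesic inequality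
  bounds the distance from \<alpha> s to \<alpha> b.\<close>

lemma constricting_point_near_endpoint:
  assumes pss: "path_system_space \<mu> \<nu> \<Gamma>" and cons: "constricting \<Gamma> \<delta> A \<pi>"
    and \<gamma>: "(a, b, \<alpha>) \<in> \<Gamma>" and s: "s \<in> {a..b}"
    and far: "dist (\<pi> (\<alpha> a)) (\<pi> (\<alpha> s)) > \<delta>" and near: "dist (\<pi> (\<alpha> s)) (\<alpha> b) \<le> R"
  shows "dist (\<alpha> s) (\<alpha> b) \<le> \<bar>\<mu>\<bar> * (\<delta> + R) + \<bar>\<nu>\<bar>"
proof -
  have qg: "quasi_geodesic \<mu> \<nu> (a, b, \<alpha>)" using path_system_space_quasi_geodesic[OF pss \<gamma>] .
  have "(a, s, \<alpha>) \<in> \<Gamma>" using path_system_space_subpath[OF pss \<gamma>] s by auto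
  then obtain t where t: "t \<in> {a..s}" "dist (\<pi> (\<alpha> s)) (\<alpha> t) \<le> \<delta>"
    using constricting_meets_near_end[OF cons _ far] by blast
  have tb: "t \<in> {a..b}" "b \<in> {a..b}" using t(1) s by auto
  have "dist (\<alpha> t) (\<alpha> b) \<le> \<delta> + R"
    using t(2) near dist_triangle[of "\<alpha> t" "\<alpha> b" "\<pi> (\<alpha> s)"] by (simp add: dist_commute)
  then have "\<bar>t - b\<bar> \<le> \<bar>\<mu>\<bar> * (\<delta> + R) + \<bar>\<nu>\<bar>" using quasi_geodesic_param_dist_le[OF qg tb] by blast
  moreover have "dist (\<alpha> s) (\<alpha> b) \<le> \<bar>s - b\<bar>" using quasi_geodesic_dist_le[OF qg s tb(2)] .
  moreover have "\<bar>s - b\<bar> \<le> \<bar>t - b\<bar>" using t(1) s by auto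
  ultimately show ?thesis by linarith
qed

lemma constricting_pair_proj_dist_le:
  fixes \<Gamma> :: "'a::metric_space rpath set"
  assumes pss: "path_system_space \<mu> \<nu> \<Gamma>"
    and cA: "constricting \<Gamma> \<delta> A \<pi>A" and cB: "constricting \<Gamma> \<delta> B \<pi>B"
    and diam_BA: "diam_le (\<pi>B ` A) \<epsilon>" and diam_BY: "diam_le (\<pi>B ` Y) \<epsilon>"
    and a: "a \<in> A" "y' \<in> Y" "dist a y' \<le> \<eta>"
    and b: "b \<in> B" "y \<in> Y" "dist b y \<le> \<eta>"
  defines "L \<equiv> coarse_lip_bound \<mu> \<nu> \<delta>"
  defines "K \<equiv> L \<delta> + (2*\<epsilon> + L \<eta>)"
  shows "dist (\<pi>A x) (\<pi>A y) \<le> \<delta> + L (\<delta> + \<bar>\<mu>\<bar> * (\<delta> + (K + L \<eta> + \<delta> + \<eta>)) + \<bar>\<nu>\<bar>)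
       \<or> dist (\<pi>B x) (\<pi>B y) \<le> \<delta> + K"
proof (cases "dist (\<pi>A x) (\<pi>A y) \<le> \<delta>")
  case True
  then have "\<delta> \<ge> 0" using zero_le_dist[of "\<pi>A x" "\<pi>A y"] by linarith
  moreover have "dist (\<pi>B a) (\<pi>B a) \<le> \<epsilon>" using diam_BA a(1) unfolding diam_le_def by blast
  then have "\<epsilon> \<ge> 0" by simp
  moreover have "\<eta> \<ge> 0" using a(3) zero_le_dist[of a y'] by linarith
  ultimately have "L \<delta> \<ge> 0" "L \<eta> \<ge> 0" "2*\<epsilon> \<ge> 0" unfolding L_def by (simp_all add: coarse_lip_bound_nonneg)
  then have "0 \<le> \<delta> + (K + L \<eta> + \<delta> + \<eta>)" unfolding K_def using \<open>\<delta> \<ge> 0\<close> \<open>\<eta> \<ge> 0\<close> by linarith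
  then have "0 \<le> \<delta> + \<bar>\<mu>\<bar> * (\<delta> + (K + L \<eta> + \<delta> + \<eta>)) + \<bar>\<nu>\<bar>" using \<open>\<delta> \<ge> 0\<close> by simp
  then have "L (\<delta> + \<bar>\<mu>\<bar> * (\<delta> + (K + L \<eta> + \<delta> + \<eta>)) + \<bar>\<nu>\<bar>) \<ge> 0"
    unfolding L_def by (rule coarse_lip_bound_nonneg[OF \<open>\<delta> \<ge> 0\<close>])
  then have "dist (\<pi>A x) (\<pi>A y) \<le> \<delta> + L (\<delta> + \<bar>\<mu>\<bar> * (\<delta> + (K + L \<eta> + \<delta> + \<eta>)) + \<bar>\<nu>\<bar>)"
    using True by linarith
  then show ?thesis ..
next
  case False
  obtain a0 b0 \<alpha> where \<gamma>: "(a0, b0, \<alpha>) \<in> \<Gamma>" "\<alpha> a0 = x" "\<alpha> b0 = y"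
    using path_system_space_joins[OF pss] .
  have "dist (\<pi>A (\<alpha> a0)) (\<pi>A (\<alpha> b0)) > \<delta>" using False \<gamma>(2,3) by simp
  then obtain s where s: "s \<in> {a0..b0}" "dist (\<pi>A x) (\<alpha> s) \<le> \<delta>"
    using constricting_meets_near_start[OF cA \<gamma>(1)] \<gamma>(2) by blast
  have "dist (\<pi>B (\<alpha> s)) (\<pi>B (\<pi>A x)) \<le> L \<delta>"
    unfolding L_def using constricting_coarse_lipschitz[OF pss cB] s(2) by (simp add: dist_commute)
  moreover have "dist (\<pi>B (\<pi>A x)) (\<pi>B y) \<le> 2*\<epsilon> + L \<eta>" unfolding L_def
    by (rule constricting_proj_dist_le_of_diam_le[OF pss cB diam_BA diam_BY a constricting_range[OF cA] b(2)])
  ultimately have near_B: "dist (\<pi>B (\<alpha> s)) (\<pi>B y) \<le> K"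
    unfolding K_def using dist_triangle[of "\<pi>B (\<alpha> s)" "\<pi>B y" "\<pi>B (\<pi>A x)"] by linarith
  show ?thesis
  proof (cases "dist (\<pi>B x) (\<pi>B (\<alpha> s)) \<le> \<delta>")
    case True
    then have "dist (\<pi>B x) (\<pi>B y) \<le> \<delta> + K"
      using near_B dist_triangle[of "\<pi>B x" "\<pi>B y" "\<pi>B (\<alpha> s)"] by linarith
    then show ?thesis ..
  next
    case False
    have "dist y b \<le> \<eta>" using b(3) by (simp add: dist_commute)
    then have "dist (\<pi>B y) y \<le> L \<eta> + \<delta> + \<eta>"
      unfolding L_def by (rule constricting_dist_proj_self_le[OF pss cB b(1)])
    then have "dist (\<pi>B (\<alpha> s)) (\<alpha> b0) \<le> K + L \<eta> + \<delta> + \<eta>"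
      unfolding \<gamma>(3) using near_B dist_triangle[of "\<pi>B (\<alpha> s)" y "\<pi>B y"] by linarith
    moreover have "dist (\<pi>B (\<alpha> a0)) (\<pi>B (\<alpha> s)) > \<delta>" using False \<gamma>(2) by simp
    ultimately have "dist (\<alpha> s) y \<le> \<bar>\<mu>\<bar> * (\<delta> + (K + L \<eta> + \<delta> + \<eta>)) + \<bar>\<nu>\<bar>"
      using constricting_point_near_endpoint[OF pss cB \<gamma>(1) s(1)] \<gamma>(3) by blast
    then have "dist (\<pi>A x) y \<le> \<delta> + \<bar>\<mu>\<bar> * (\<delta> + (K + L \<eta> + \<delta> + \<eta>)) + \<bar>\<nu>\<bar>"
      using s(2) dist_triangle[of "\<pi>A x" y "\<alpha> s"] by linarith
    then have "dist (\<pi>A x) (\<pi>A y) \<le> \<delta> + L (\<delta> + \<bar>\<mu>\<bar> * (\<delta> + (K + L \<eta> + \<delta> + \<eta>)) + \<bar>\<nu>\<bar>)"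
      unfolding L_def by (rule constricting_dist_proj_le_of_near_proj[OF pss cA])
    then show ?thesis ..
  qed
qed

definition proj_bound :: "real \<Rightarrow> real \<Rightarrow> real \<Rightarrow> real \<Rightarrow> real" where
  "proj_bound \<mu> \<nu> \<delta> \<epsilon> =
    (let L = coarse_lip_bound \<mu> \<nu> \<delta>; K = L \<delta> + (2*\<epsilon> + L (\<epsilon> + 1))
     in max (\<delta> + L (\<delta> + \<bar>\<mu>\<bar> * (\<delta> + (K + L (\<epsilon> + 1) + \<delta> + (\<epsilon> + 1))) + \<bar>\<nu>\<bar>)) (\<delta> + K))"

lemma proj_bound_nonneg:
  assumes "\<delta> \<ge> 0" "\<epsilon> \<ge> 0"
  shows "proj_bound \<mu> \<nu> \<delta> \<epsilon> \<ge> 0"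
proof -
  have "coarse_lip_bound \<mu> \<nu> \<delta> \<delta> + (2*\<epsilon> + coarse_lip_bound \<mu> \<nu> \<delta> (\<epsilon> + 1)) \<ge> 0"
    using assms by (simp add: coarse_lip_bound_nonneg)
  then show ?thesis unfolding proj_bound_def Let_def using assms(1) by (simp add: le_max_iff_disj)
qed

lemma constricting_pair_min_setdist_le:
  fixes \<Gamma> :: "'a::metric_space rpath set"
  assumes pss: "path_system_space \<mu> \<nu> \<Gamma>"
    and cA: "constricting \<Gamma> \<delta> A \<pi>A" and cB: "constricting \<Gamma> \<delta> B \<pi>B" and "Y \<noteq> {}"
    and "diam_le (\<pi>B ` A) \<epsilon>" "diam_le (\<pi>B ` Y) \<epsilon>" "setdist A Y \<le> \<epsilon>" "setdist B Y \<le> \<epsilon>"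
  shows "min (setdist {\<pi>A x} (\<pi>A ` Y)) (setdist {\<pi>B x} (\<pi>B ` Y)) \<le> proj_bound \<mu> \<nu> \<delta> \<epsilon>"
proof -
  have "A \<noteq> {}" "B \<noteq> {}" using constricting_range[OF cA, of x] constricting_range[OF cB, of x] by blast+
  moreover have "setdist A Y < \<epsilon> + 1" "setdist B Y < \<epsilon> + 1" using assms(7,8) by linarith+
  ultimately obtain a y' b y where a: "a \<in> A" "y' \<in> Y" "dist a y' < \<epsilon> + 1"
    and b: "b \<in> B" "y \<in> Y" "dist b y < \<epsilon> + 1"
    by (elim setdist_ltE[where T = Y, OF _ _ \<open>Y \<noteq> {}\<close>])
  have "dist (\<pi>A x) (\<pi>A y) \<le> proj_bound \<mu> \<nu> \<delta> \<epsilon> \<or> dist (\<pi>B x) (\<pi>B y) \<le> proj_bound \<mu> \<nu> \<delta> \<epsilon>"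
    using constricting_pair_proj_dist_le[OF pss cA cB assms(5,6) a(1,2) less_imp_le[OF a(3)]
        b(1,2) less_imp_le[OF b(3)], of x]
    unfolding proj_bound_def Let_def le_max_iff_disj by blast
  then show ?thesis using setdist_le_dist[of "\<pi>A x" "{\<pi>A x}" "\<pi>A y" "\<pi>A ` Y"]
    setdist_le_dist[of "\<pi>B x" "{\<pi>B x}" "\<pi>B y" "\<pi>B ` Y"] b(2) by auto
qed

theorem mainTheorem8:
  fixes \<Gamma> :: "'a::metric_space rpath set" and \<mu> \<nu> :: real
  assumes "path_system_space \<mu> \<nu> \<Gamma>"
  shows "\<forall>\<delta>\<ge>0. \<forall>\<epsilon>\<ge>0. \<exists>\<theta>\<ge>0. \<forall>(A::'a set) B \<pi>A \<pi>B (Y::'a set).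
     constricting \<Gamma> \<delta> A \<pi>A \<and> constricting \<Gamma> \<delta> B \<pi>B \<and> Y \<noteq> {} \<and>
     diam_le (\<pi>A ` B) \<epsilon> \<and> diam_le (\<pi>B ` A) \<epsilon> \<and>
     diam_le (\<pi>A ` Y) \<epsilon> \<and> diam_le (\<pi>B ` Y) \<epsilon> \<and>
     setdist A Y \<le> \<epsilon> \<and> setdist B Y \<le> \<epsilon>
     \<longrightarrow> (\<forall>x. min (setdist {\<pi>A x} (\<pi>A ` Y)) (setdist {\<pi>B x} (\<pi>B ` Y)) \<le> \<theta>)"
  apply (intro allI impI)
  subgoal for \<delta> \<epsilon>
    using constricting_pair_min_setdist_le[OF assms]
    by (intro exI[of _ "proj_bound \<mu> \<nu> \<delta> \<epsilon>"] conjI proj_bound_nonneg allI impI) blast+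
  done

end
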